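(* Let $\varphi=\frac{1+\sqrt5}{2}$ and for every integer $k$ let $F_k=\frac{\varphi^k-(-1/\varphi)^k}{\varphi+1/\varphi}$. On the complex vector space with basis $\{|n_1,n_2\rangle:n_1,n_2\ge0\}$ define, for $i=1,2$, operators $N_i$, $b_i$, $b_i^+$ acting on the $i$-th index by $N_1|n_1,n_2\rangle=n_1|n_1,n_2\rangle$, $b_1^+|n_1,n_2\rangle=\sqrt{F_{n_1+1}}|n_1+1,n_2\rangle$, $b_1|n_1,n_2\rangle=\sqrt{F_{n_1}}|n_1-1,n_2\rangle$ (zero if $n_1=0$), and analogously for index 2. Let $$J_+^F=b_1^+b_2,\qquad J_-^F=b_2^+b_1,\qquad J_z^F=\frac{N_1-N_2}{2},$$ and let $(-1)^{N_i}$, $F_{2J_z}$, $F_{-2J_z}$ be the diagonal operators acting on $|n_1,n_2\rangle$ by $(-1)^{n_i}$, $F_{n_1-n_2}$, $F_{n_2-n_1}$ respectively. Then $$[J_+^F,J_-^F]=(-1)^{N_2}F_{2J_z}=-(-1)^{N_1}F_{-2J_z},\qquad [J_z^F,J_\pm^F]=\pm J_\pm^F.$$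
   Context: $[A,B]=AB-BA$. *)

theory Defs
  imports Complex_Main
begin

definition phi :: real where "phi = (1 + sqrt 5) / 2"

definition Fib :: "int \<Rightarrow> real" where
  "Fib k = (phi powi k - (-1 / phi) powi k) / (phi + 1 / phi)"

text \<open>A vector sum c(n1,n2) |n1,n2> is represented by its coefficient function c;
  vectors of the space spanned by the basis are those with finite support.\<close>
type_synonym vec = "nat \<times> nat \<Rightarrow> complex"

definition finsupp :: "vec \<Rightarrow> bool" where
  "finsupp v \<longleftrightarrow> finite {p. v p \<noteq> 0}"

definition ket :: "nat \<Rightarrow> nat \<Rightarrow> vec" where
  "ket n1 n2 = (\<lambda>p. if p = (n1, n2) then 1 else 0)"

text \<open>Linear extensions of the basis actions, written on coefficients.
  bp1 (ket n1 n2) = sqrt(F(n1+1)) ket (n1+1) n2 ; b1 (ket n1 n2) = sqrt(F n1) ket (n1-1) n2 (0 if n1=0).\<close>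
definition N1 :: "vec \<Rightarrow> vec" where
  "N1 v = (\<lambda>(n1, n2). of_nat n1 * v (n1, n2))"
definition N2 :: "vec \<Rightarrow> vec" where
  "N2 v = (\<lambda>(n1, n2). of_nat n2 * v (n1, n2))"
definition bp1 :: "vec \<Rightarrow> vec" where
  "bp1 v = (\<lambda>(n1, n2). if n1 = 0 then 0
      else complex_of_real (sqrt (Fib (int n1))) * v (n1 - 1, n2))"
definition bp2 :: "vec \<Rightarrow> vec" where
  "bp2 v = (\<lambda>(n1, n2). if n2 = 0 then 0
      else complex_of_real (sqrt (Fib (int n2))) * v (n1, n2 - 1))"
definition b1 :: "vec \<Rightarrow> vec" where
  "b1 v = (\<lambda>(n1, n2). complex_of_real (sqrt (Fib (int n1 + 1))) * v (n1 + 1, n2))"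
definition b2 :: "vec \<Rightarrow> vec" where
  "b2 v = (\<lambda>(n1, n2). complex_of_real (sqrt (Fib (int n2 + 1))) * v (n1, n2 + 1))"

definition Jplus :: "vec \<Rightarrow> vec" where "Jplus v = bp1 (b2 v)"
definition Jminus :: "vec \<Rightarrow> vec" where "Jminus v = bp2 (b1 v)"
definition Jz :: "vec \<Rightarrow> vec" where "Jz v = (\<lambda>p. (N1 v p - N2 v p) / 2)"

definition diag :: "(nat \<Rightarrow> nat \<Rightarrow> complex) \<Rightarrow> vec \<Rightarrow> vec" where
  "diag d v = (\<lambda>(n1, n2). d n1 n2 * v (n1, n2))"

definition comm :: "(vec \<Rightarrow> vec) \<Rightarrow> (vec \<Rightarrow> vec) \<Rightarrow> vec \<Rightarrow> vec" where
  "comm A B v = (\<lambda>p. A (B v) p - B (A v) p)"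

end

theory Submission imports Defs begin

text \<open>All operators act pointwise on coefficient functions. \<open>J+ J-\<close> and \<open>J- J+\<close> are
  diagonal with eigenvalues \<open>F(n1) F(n2+1)\<close> and \<open>F(n2) F(n1+1)\<close>; the square roots cancel because
  \<open>F(k) \<ge> 0\<close> for \<open>k \<ge> 0\<close>. Their difference is \<open>(-1)^n2 F(n1-n2)\<close> by d'Ocagne's identity
  \<open>F(m) F(n+1) - F(n) F(m+1) = (-1)^n F(m-n)\<close>, which by Binet's formula reduces to
  \<open>\<phi> \<psi> = -1\<close>; exchanging \<open>m\<close> and \<open>n\<close> in it gives the second form. Finally \<open>J\<plusminus>\<close> changes
  \<open>n1 - n2\<close> by \<open>\<plusminus>2\<close>, which yields the commutators with \<open>Jz\<close>.\<close>

definition psi :: real where "psi = -1 / phi"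

lemma phi_pos: "0 < phi"
  unfolding phi_def by (simp add: add_pos_nonneg)

lemma phi_times_psi: "phi * psi = -1"
  using phi_pos by (simp add: psi_def)

lemma phi_squared: "phi\<^sup>2 = phi + 1"
  unfolding phi_def by (simp add: power2_eq_square field_simps)

lemma psi_squared: "psi\<^sup>2 = psi + 1"
  using phi_squared phi_pos by (simp add: psi_def power2_eq_square field_simps)

lemma phi_minus_psi_pos: "0 < phi - psi"
  using phi_pos by (simp add: psi_def add_pos_pos)

lemma Fib_Binet: "Fib k = (phi powi k - psi powi k) / (phi - psi)"
  by (simp add: Fib_def psi_def)

lemma power_int_golden_rec:
  fixes x :: "'a::field"
  assumes "x\<^sup>2 = x + 1" "x \<noteq> 0"
  shows "x powi (k + 2) = x powi (k + 1) + x powi k"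
proof -
  have "x powi (k + 2) = x powi k * x\<^sup>2"
    using assms(2) by (simp add: power_int_add)
  also have "\<dots> = x powi k * x + x powi k"
    unfolding assms(1) by (simp add: algebra_simps)
  finally show ?thesis
    using assms(2) by (simp add: power_int_add)
qed

lemma Fib_rec: "Fib (k + 2) = Fib (k + 1) + Fib k"
proof -
  have "phi \<noteq> 0" "psi \<noteq> 0"
    using phi_times_psi by auto
  then show ?thesis
    unfolding Fib_Binet
    by (simp add: power_int_golden_rec phi_squared psi_squared diff_divide_distrib add_divide_distrib)
qed

lemma Fib_0: "Fib 0 = 0"
  by (simp add: Fib_def)

lemma Fib_1: "Fib 1 = 1"
  using phi_minus_psi_pos by (simp add: Fib_Binet)

lemma Fib_nonneg:
  assumes "0 \<le> k"
  shows "0 \<le> Fib k"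
proof -
  have "0 \<le> Fib (int n) \<and> 0 \<le> Fib (int n + 1)" for n
  proof (induction n)
    case 0
    show ?case by (simp add: Fib_0 Fib_1)
  next
    case (Suc n)
    then show ?case
      using Fib_rec[of "int n"] by (simp add: add.commute)
  qed
  moreover obtain n where "k = int n"
    using assms nonneg_int_cases by blast
  ultimately show ?thesis by blast
qed

lemma power_int_diff_product:
  fixes x y :: "'a::field"
  assumes "x \<noteq> 0" "y \<noteq> 0"
  shows "(x powi m - y powi m) * (x powi (n + 1) - y powi (n + 1))
           - (x powi n - y powi n) * (x powi (m + 1) - y powi (m + 1))
         = (x * y) powi n * (x - y) * (x powi (m - n) - y powi (m - n))"
proof -
  have split: "z powi m = z powi n * z powi (m - n)" if "z \<noteq> 0" for z :: 'a
    using that by (simp flip: power_int_add)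
  show ?thesis
    using assms
    by (simp add: split[of x] split[of y] power_int_add power_int_mult_distrib algebra_simps)
qed

lemma Fib_dOcagne: "Fib m * Fib (n + 1) - Fib n * Fib (m + 1) = (-1) powi n * Fib (m - n)"
proof -
  define s where "s = phi - psi"
  have "s \<noteq> 0"
    using phi_minus_psi_pos by (simp add: s_def)
  have "phi \<noteq> 0" "psi \<noteq> 0"
    using phi_times_psi by auto
  have "Fib m * Fib (n + 1) - Fib n * Fib (m + 1)
      = ((phi powi m - psi powi m) * (phi powi (n + 1) - psi powi (n + 1))
          - (phi powi n - psi powi n) * (phi powi (m + 1) - psi powi (m + 1))) / (s * s)"
    unfolding Fib_Binet s_def[symmetric] using \<open>s \<noteq> 0\<close> by (simp add: field_simps)
  also have "\<dots> = (phi * psi) powi n * s * (phi powi (m - n) - psi powi (m - n)) / (s * s)"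
    unfolding s_def by (simp only: power_int_diff_product[OF \<open>phi \<noteq> 0\<close> \<open>psi \<noteq> 0\<close>])
  also have "\<dots> = (-1) powi n * Fib (m - n)"
    unfolding phi_times_psi Fib_Binet s_def[symmetric] using \<open>s \<noteq> 0\<close> by simp
  finally show ?thesis .
qed

lemma Fib_diff_antisym: "(-1) ^ b * Fib (int a - int b) = - ((-1) ^ a * Fib (int b - int a))"
  using Fib_dOcagne[of "int a" "int b"] Fib_dOcagne[of "int b" "int a"]
  by (simp add: power_int_of_nat)

lemma of_real_sqrt_Fib_squared:
  assumes "0 \<le> k"
  shows "complex_of_real (sqrt (Fib k)) * complex_of_real (sqrt (Fib k)) = complex_of_real (Fib k)"
  using Fib_nonneg[OF assms] by (simp flip: of_real_mult)

lemma Jplus_apply: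
  "Jplus v (a, b) = (if a = 0 then 0
     else complex_of_real (sqrt (Fib (int a))) * complex_of_real (sqrt (Fib (int b + 1))) * v (a - 1, b + 1))"
  by (simp add: Jplus_def bp1_def b2_def)

lemma Jminus_apply:
  "Jminus v (a, b) = (if b = 0 then 0
     else complex_of_real (sqrt (Fib (int b))) * complex_of_real (sqrt (Fib (int a + 1))) * v (a + 1, b - 1))"
  by (simp add: Jminus_def bp2_def b1_def)

lemma Jz_apply: "Jz v (a, b) = (of_nat a - of_nat b) / 2 * v (a, b)"
  by (simp add: Jz_def N1_def N2_def algebra_simps diff_divide_distrib)

lemma Jplus_Jminus_apply:
  "Jplus (Jminus v) (a, b) = complex_of_real (Fib (int a) * Fib (int b + 1)) * v (a, b)"
proof (cases "a = 0")
  case True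
  then show ?thesis by (simp add: Jplus_apply Fib_0)
next
  case False
  then have "int (a - 1) + 1 = int a" "a - 1 + 1 = a" by auto
  then have "Jplus (Jminus v) (a, b)
      = (complex_of_real (sqrt (Fib (int a))) * complex_of_real (sqrt (Fib (int a))))
        * (complex_of_real (sqrt (Fib (int b + 1))) * complex_of_real (sqrt (Fib (int b + 1)))) * v (a, b)"
    using False by (simp add: Jplus_apply Jminus_apply mult_ac add.commute)
  then show ?thesis
    by (simp add: of_real_sqrt_Fib_squared add.commute)
qed

lemma Jminus_Jplus_apply:
  "Jminus (Jplus v) (a, b) = complex_of_real (Fib (int b) * Fib (int a + 1)) * v (a, b)"
proof (cases "b = 0")
  case True
  then show ?thesis by (simp add: Jminus_apply Fib_0)
next
  case False
  then have "int (b - 1) + 1 = int b" "b - 1 + 1 = b" by auto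
  then have "Jminus (Jplus v) (a, b)
      = (complex_of_real (sqrt (Fib (int b))) * complex_of_real (sqrt (Fib (int b))))
        * (complex_of_real (sqrt (Fib (int a + 1))) * complex_of_real (sqrt (Fib (int a + 1)))) * v (a, b)"
    using False by (simp add: Jplus_apply Jminus_apply mult_ac add.commute)
  then show ?thesis
    by (simp add: of_real_sqrt_Fib_squared add.commute)
qed

lemma comm_Jplus_Jminus:
  "comm Jplus Jminus v = diag (\<lambda>n1 n2. (-1) ^ n2 * complex_of_real (Fib (int n1 - int n2))) v"
proof
  fix p :: "nat \<times> nat"
  obtain a b where p: "p = (a, b)" by fastforce
  have dOcagne: "Fib (int a) * Fib (int b + 1) - Fib (int b) * Fib (int a + 1) = (-1) ^ b * Fib (int a - int b)"
    using Fib_dOcagne[of "int a" "int b"] by simp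
  have "complex_of_real (Fib (int a) * Fib (int b + 1)) - complex_of_real (Fib (int b) * Fib (int a + 1))
      = (-1) ^ b * complex_of_real (Fib (int a - int b))"
    using arg_cong[OF dOcagne, of complex_of_real] by simp
  then show "comm Jplus Jminus v p = diag (\<lambda>n1 n2. (-1) ^ n2 * complex_of_real (Fib (int n1 - int n2))) v p"
    unfolding p comm_def diag_def Jplus_Jminus_apply Jminus_Jplus_apply
    by (simp flip: left_diff_distrib)
qed

lemma comm_Jz_Jplus: "comm Jz Jplus v = Jplus v"
proof
  fix p :: "nat \<times> nat"
  obtain a b where p: "p = (a, b)" by fastforce
  show "comm Jz Jplus v p = Jplus v p"
  proof (cases "a = 0")
    case True
    then show ?thesis by (simp add: p comm_def Jplus_apply Jz_apply)
  next
    case False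
    then show ?thesis
      by (simp add: p comm_def Jplus_apply Jz_apply of_nat_diff field_simps)
  qed
qed

lemma comm_Jz_Jminus: "comm Jz Jminus v = (\<lambda>p. - Jminus v p)"
proof
  fix p :: "nat \<times> nat"
  obtain a b where p: "p = (a, b)" by fastforce
  show "comm Jz Jminus v p = - Jminus v p"
  proof (cases "b = 0")
    case True
    then show ?thesis by (simp add: p comm_def Jminus_apply Jz_apply)
  next
    case False
    then show ?thesis
      by (simp add: p comm_def Jminus_apply Jz_apply of_nat_diff field_simps)
  qed
qed

lemma diag_Fib_diff_swap:
  "diag (\<lambda>n1 n2. (-1) ^ n2 * complex_of_real (Fib (int n1 - int n2))) v
     = (\<lambda>p. - diag (\<lambda>n1 n2. (-1) ^ n1 * complex_of_real (Fib (int n2 - int n1))) v p)"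
proof
  fix p :: "nat \<times> nat"
  obtain a b where p: "p = (a, b)" by fastforce
  have "(-1) ^ b * complex_of_real (Fib (int a - int b)) = - ((-1) ^ a * complex_of_real (Fib (int b - int a)))"
    using arg_cong[OF Fib_diff_antisym[of b a], of complex_of_real] by simp
  then show "diag (\<lambda>n1 n2. (-1) ^ n2 * complex_of_real (Fib (int n1 - int n2))) v p
      = - diag (\<lambda>n1 n2. (-1) ^ n1 * complex_of_real (Fib (int n2 - int n1))) v p"
    by (simp add: p diag_def)
qed

(* The identities hold for arbitrary coefficient functions. *)
theorem mainTheorem14:
  fixes v :: vec
  assumes "finsupp v"
  shows "comm Jplus Jminus v
           = diag (\<lambda>n1 n2. (-1) ^ n2 * complex_of_real (Fib (int n1 - int n2))) v
       \<and> comm Jplus Jminus v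
           = (\<lambda>p. - diag (\<lambda>n1 n2. (-1) ^ n1 * complex_of_real (Fib (int n2 - int n1))) v p)
       \<and> comm Jz Jplus v = Jplus v
       \<and> comm Jz Jminus v = (\<lambda>p. - Jminus v p)"
  by (intro conjI comm_Jplus_Jminus comm_Jz_Jplus comm_Jz_Jminus
      trans[OF comm_Jplus_Jminus diag_Fib_diff_swap])

end
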